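(* Let $H$ be a complex separable Hilbert space and let $S\in B(H)$ have Cartesian decomposition $S=A+iC$ ($A,C$ self-adjoint) with $A$ and $C$ positive. Then $$\|S^*S-SS^*\|\le \frac12\left(\|A\|^2+\|C\|^2\right).$$
   Context: $B(H)$ denotes the algebra of bounded linear operators on $H$ with the operator norm. The Cartesian decomposition of $S\in B(H)$ is $S=A+iC$ with $A=\frac{S+S^*}{2}$ and $C=\frac{S-S^*}{2i}$ self-adjoint. *)

theory Defs
  imports "HOL-Analysis.Analysis"
begin

text \<open>A complex Hilbert space is modelled as its underlying real Hilbert space
  (a type of class real_inner and complete_space) together with an orthogonal
  complex structure J (multiplication by the imaginary unit).\<close>

definition complex_structure :: "('a::real_inner \<Rightarrow> 'a) \<Rightarrow> bool" where
  "complex_structure J \<longleftrightarrow> linear J \<and> (\<forall>x. J (J x) = - x) \<and> (\<forall>x y. inner (J x) (J y) = inner x y)"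

text \<open>Complex scalar multiplication and the complex inner product
  (conjugate-linear in the first, linear in the second argument).\<close>

definition cscale :: "('a::real_inner \<Rightarrow> 'a) \<Rightarrow> complex \<Rightarrow> 'a \<Rightarrow> 'a" where
  "cscale J c x = Re c *\<^sub>R x + Im c *\<^sub>R J x"

definition cinner :: "('a::real_inner \<Rightarrow> 'a) \<Rightarrow> 'a \<Rightarrow> 'a \<Rightarrow> complex" where
  "cinner J x y = Complex (inner x y) (- inner x (J y))"

definition bounded_op :: "('a::real_inner \<Rightarrow> 'a) \<Rightarrow> ('a \<Rightarrow> 'a) \<Rightarrow> bool" where
  "bounded_op J T \<longleftrightarrow> bounded_linear T \<and> (\<forall>c x. T (cscale J c x) = cscale J c (T x))"

definition cadjoint :: "('a::real_inner \<Rightarrow> 'a) \<Rightarrow> ('a \<Rightarrow> 'a) \<Rightarrow> ('a \<Rightarrow> 'a)" where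
  "cadjoint J T = (THE T'. \<forall>x y. cinner J (T x) y = cinner J x (T' y))"

definition self_adjoint :: "('a::real_inner \<Rightarrow> 'a) \<Rightarrow> ('a \<Rightarrow> 'a) \<Rightarrow> bool" where
  "self_adjoint J T \<longleftrightarrow> bounded_op J T \<and> cadjoint J T = T"

definition positive_op :: "('a::real_inner \<Rightarrow> 'a) \<Rightarrow> ('a \<Rightarrow> 'a) \<Rightarrow> bool" where
  "positive_op J T \<longleftrightarrow> (\<forall>x. Im (cinner J (T x) x) = 0 \<and> Re (cinner J (T x) x) \<ge> 0)"

definition separable_space :: "'a::metric_space itself \<Rightarrow> bool" where
  "separable_space _ \<longleftrightarrow> (\<exists>D::'a set. countable D \<and> closure D = UNIV)"

end

theory Submission
  imports Defs
begin

text \<open>For a positive operator \<open>A\<close> with \<open>a = \<parallel>A\<parallel>\<close>, Cauchy-Schwarz for the form \<open>\<langle>A\<cdot>,\<cdot>\<rangle>\<close>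
  gives \<open>\<parallel>Au\<parallel>\<^sup>2 \<le> a\<langle>Au,u\<rangle>\<close>, which is exactly \<open>\<parallel>A - a/2\<parallel> \<le> a/2\<close>. Writing \<open>A = a/2 + A'\<close> and
  \<open>C = c/2 + C'\<close>, the scalar parts drop out of the commutator, so \<open>\<parallel>AC - CA\<parallel> \<le> 2\<parallel>A'\<parallel>\<parallel>C'\<parallel> \<le> ac/2\<close>.
  For \<open>S = A + iC\<close> one has \<open>S\<^sup>*S - SS\<^sup>* = 2i(AC - CA)\<close>, whence \<open>\<parallel>S\<^sup>*S - SS\<^sup>*\<parallel> \<le> ac \<le> (a\<^sup>2 + c\<^sup>2)/2\<close>.\<close>

lemma quadratic_nonneg_imp_discriminant_le:
  fixes p b q :: real
  assumes nonneg: "\<And>t. 0 \<le> p + 2*t*b + t^2*q" and "0 \<le> q"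
  shows "b^2 \<le> p * q"
proof (cases "q = 0")
  case True
  show ?thesis
  proof (rule ccontr)
    assume "\<not> ?thesis"
    then have "b \<noteq> 0" using True by auto
    have "0 \<le> p + 2*(-(p+1)/(2*b))*b + (-(p+1)/(2*b))^2*q" by (rule nonneg)
    also have "\<dots> = -1" using True \<open>b \<noteq> 0\<close> by (simp add: field_simps)
    finally show False by simp
  qed
next
  case False
  with \<open>0 \<le> q\<close> have "q > 0" by simp
  have "0 \<le> p + 2*(-b/q)*b + (-b/q)^2*q" by (rule nonneg)
  also have "\<dots> = p - b^2/q" using \<open>q > 0\<close> by (simp add: field_simps power2_eq_square)
  finally show ?thesis using \<open>q > 0\<close> by (simp add: field_simps mult.commute)
qed

lemma positive_symmetric_cauchy_schwarz:
  fixes A :: "'a::real_inner \<Rightarrow> 'a"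
  assumes lin: "linear A" and sym: "\<And>x y. inner (A x) y = inner x (A y)"
    and pos: "\<And>x. 0 \<le> inner (A x) x"
  shows "(inner (A u) v)^2 \<le> inner (A u) u * inner (A v) v"
proof (rule quadratic_nonneg_imp_discriminant_le)
  fix t :: real
  have "inner (A v) u = inner (A u) v" using sym[of v u] by (simp add: inner_commute)
  then have "inner (A (u + t *\<^sub>R v)) (u + t *\<^sub>R v)
      = inner (A u) u + 2*t*inner (A u) v + t^2 * inner (A v) v"
    by (simp add: linear_add[OF lin] linear_scale[OF lin] inner_add_left inner_add_right
        power2_eq_square algebra_simps)
  then show "0 \<le> inner (A u) u + 2*t*inner (A u) v + t^2 * inner (A v) v"
    using pos by metis
qed (rule pos)

lemma positive_symmetric_norm_sq_le:
  fixes A :: "'a::real_inner \<Rightarrow> 'a"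
  assumes bl: "bounded_linear A" and sym: "\<And>x y. inner (A x) y = inner x (A y)"
    and pos: "\<And>x. 0 \<le> inner (A x) x"
  shows "(norm (A u))^2 \<le> onorm A * inner (A u) u"
proof (cases "A u = 0")
  case True
  then show ?thesis using onorm_pos_le[OF bl] pos[of u] by simp
next
  case False
  define n where "n = norm (A u)"
  have "n > 0" using False unfolding n_def by simp
  have "(n^2)^2 = (inner (A u) (A u))^2" unfolding n_def by (simp add: power2_norm_eq_inner)
  also have "\<dots> \<le> inner (A u) u * inner (A (A u)) (A u)"
    using bl sym pos by (intro positive_symmetric_cauchy_schwarz) (auto dest: bounded_linear.linear)
  also have "\<dots> \<le> inner (A u) u * (onorm A * n^2)"
  proof (rule mult_left_mono[OF _ pos])
    have "inner (A (A u)) (A u) \<le> norm (A (A u)) * n" unfolding n_def by (rule norm_cauchy_schwarz)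
    also have "\<dots> \<le> (onorm A * n) * n" unfolding n_def by (rule mult_right_mono[OF onorm[OF bl]]) simp
    finally show "inner (A (A u)) (A u) \<le> onorm A * n^2" by (simp add: power2_eq_square)
  qed
  finally have "n^2 * n^2 \<le> (onorm A * inner (A u) u) * n^2"
    by (simp add: power2_eq_square algebra_simps)
  moreover have "n^2 > 0" using \<open>n > 0\<close> by simp
  ultimately show ?thesis unfolding n_def using mult_right_le_imp_le by blast
qed

lemma positive_symmetric_norm_shift_le:
  fixes A :: "'a::real_inner \<Rightarrow> 'a"
  assumes bl: "bounded_linear A" and sym: "\<And>x y. inner (A x) y = inner x (A y)"
    and pos: "\<And>x. 0 \<le> inner (A x) x"
  shows "norm (A u - (onorm A / 2) *\<^sub>R u) \<le> onorm A / 2 * norm u"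
proof -
  define a where "a = onorm A"
  have "(norm (A u - (a / 2) *\<^sub>R u))^2 = (norm (A u))^2 - a * inner (A u) u + (a/2)^2 * (norm u)^2"
    unfolding power2_norm_eq_inner
    by (simp add: inner_diff_left inner_diff_right inner_commute power2_eq_square algebra_simps)
  also have "\<dots> \<le> (a/2 * norm u)^2"
    using positive_symmetric_norm_sq_le[OF bl sym pos, of u] unfolding a_def
    by (simp only: power_mult_distrib)
  finally show ?thesis
    unfolding a_def by (rule power2_le_imp_le) (simp add: onorm_pos_le[OF bl])
qed

lemma norm_commutator_le_of_shift_bounds:
  fixes A C :: "'a::real_normed_vector \<Rightarrow> 'a"
  assumes linA: "linear A" and linC: "linear C" and "0 \<le> \<alpha>" "0 \<le> \<gamma>"
    and A: "\<And>u. norm (A u - \<alpha> *\<^sub>R u) \<le> \<alpha> * norm u"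
    and C: "\<And>u. norm (C u - \<gamma> *\<^sub>R u) \<le> \<gamma> * norm u"
  shows "norm (A (C x) - C (A x)) \<le> 2 * \<alpha> * \<gamma> * norm x"
proof -
  define A' where "A' u = A u - \<alpha> *\<^sub>R u" for u
  define C' where "C' u = C u - \<gamma> *\<^sub>R u" for u
  have A': "norm (A' u) \<le> \<alpha> * norm u" for u unfolding A'_def by (rule A)
  have C': "norm (C' u) \<le> \<gamma> * norm u" for u unfolding C'_def by (rule C)
  have "A (C x) - C (A x) = A' (C' x) - C' (A' x)"
    unfolding A'_def C'_def
    by (simp add: linear_diff[OF linA] linear_diff[OF linC] linear_scale[OF linA]
        linear_scale[OF linC] algebra_simps)
  also have "norm \<dots> \<le> norm (A' (C' x)) + norm (C' (A' x))"
    by (rule norm_triangle_ineq4)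
  also have "\<dots> \<le> \<alpha> * (\<gamma> * norm x) + \<gamma> * (\<alpha> * norm x)"
    using order_trans[OF A'[of "C' x"] mult_left_mono[OF C'[of x]]]
      order_trans[OF C'[of "A' x"] mult_left_mono[OF A'[of x]]] \<open>0 \<le> \<alpha>\<close> \<open>0 \<le> \<gamma>\<close>
    by (intro add_mono) auto
  finally show ?thesis by (simp add: algebra_simps)
qed

lemma complex_structure_norm:
  assumes "complex_structure J"
  shows "norm (J u) = norm u"
  using assms by (simp add: complex_structure_def norm_eq_sqrt_inner)

lemma complex_structure_inner_skew:
  assumes "complex_structure J"
  shows "inner (J u) v = - inner u (J v)"
  using assms unfolding complex_structure_def by (metis inner_minus_left)

lemma bounded_op_commute_complex_structure:
  assumes "bounded_op J T"
  shows "T (J x) = J (T x)"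
proof -
  have "cscale J \<i> x = J x" for x unfolding cscale_def by simp
  with assms show ?thesis unfolding bounded_op_def by metis
qed

lemma positive_op_inner_nonneg:
  assumes "positive_op J T"
  shows "0 \<le> inner (T x) x"
  using assms unfolding positive_op_def cinner_def by simp

text \<open>Over the complex field, \<open>\<langle>Tx,x\<rangle> \<in> \<real>\<close> already forces \<open>T\<close> to be symmetric
  (polarisation along \<open>x + y\<close> and \<open>x + Jy\<close>).\<close>

lemma positive_op_symmetric:
  assumes J: "complex_structure J" and T: "bounded_op J T" and pos: "positive_op J T"
  shows "inner (T x) y = inner x (T y)"
proof -
  have linJ: "linear J" and JJ: "\<And>x. J (J x) = - x" and Jin: "\<And>x y. inner (J x) (J y) = inner x y"
    using J unfolding complex_structure_def by auto
  have lin: "linear T" using T unfolding bounded_op_def by (simp add: bounded_linear.linear)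
  have real: "inner (T x) (J x) = 0" for x
    using pos unfolding positive_op_def cinner_def by (simp add: spec[of _ x])
  have polar: "inner (T x) (J y) + inner (T y) (J x) = 0" for x y
  proof -
    have "0 = inner (T (x + y)) (J (x + y))" using real by simp
    also have "\<dots> = inner (T x) (J y) + inner (T y) (J x)"
      by (simp add: linear_add[OF lin] linear_add[OF linJ] inner_add_left inner_add_right real)
    finally show ?thesis by simp
  qed
  from polar[of x "J y"] have "- inner (T x) y + inner (T y) x = 0"
    by (simp add: JJ Jin bounded_op_commute_complex_structure[OF T])
  then show ?thesis by (simp add: inner_commute)
qed

lemma cadjoint_eqI:
  assumes adj: "\<And>x y. cinner J (S x) y = cinner J x (T y)"
  shows "cadjoint J S = T"
  unfolding cadjoint_def
proof (rule the_equality)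
  show "\<forall>x y. cinner J (S x) y = cinner J x (T y)" using adj by blast
next
  fix T' assume adj': "\<forall>x y. cinner J (S x) y = cinner J x (T' y)"
  show "T' = T"
  proof
    fix y
    have "inner x (T' y - T y) = 0" for x
      using arg_cong[OF adj'[rule_format, of x y], of Re] adj[of x y]
      by (simp add: cinner_def inner_diff_right)
    from this[of "T' y - T y"] show "T' y = T y" by simp
  qed
qed

lemma cadjoint_cartesian:
  assumes J: "complex_structure J" and A: "bounded_op J A" and C: "bounded_op J C"
    and symA: "\<And>x y. inner (A x) y = inner x (A y)"
    and symC: "\<And>x y. inner (C x) y = inner x (C y)"
    and S: "\<And>x. S x = A x + J (C x)"
  shows "cadjoint J S = (\<lambda>y. A y - J (C y))"
proof (rule cadjoint_eqI)
  fix x y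
  define T where "T y = A y - J (C y)" for y
  have real_adj: "inner (S x) y = inner x (T y)" for x y
    unfolding T_def S
    by (simp add: inner_add_left inner_diff_right symA symC complex_structure_inner_skew[OF J]
        bounded_op_commute_complex_structure[OF C])
  have "T (J y) = J (T y)"
    using J unfolding T_def complex_structure_def
    by (simp add: bounded_op_commute_complex_structure[OF A] bounded_op_commute_complex_structure[OF C]
        linear_diff)
  with real_adj[of x y] real_adj[of x "J y"] show "cinner J (S x) y = cinner J x (T y)"
    unfolding cinner_def by simp
qed

lemma cartesian_self_commutator:
  assumes J: "complex_structure J" and A: "bounded_op J A" and C: "bounded_op J C"
    and S: "\<And>x. S x = A x + J (C x)" and T: "\<And>x. T x = A x - J (C x)"
  shows "T (S x) - S (T x) = 2 *\<^sub>R J (A (C x) - C (A x))"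
proof -
  have linA: "linear A" and linC: "linear C"
    using A C unfolding bounded_op_def by (auto dest: bounded_linear.linear)
  have linJ: "linear J" and JJ: "\<And>x. J (J x) = - x"
    using J unfolding complex_structure_def by auto
  show ?thesis
    unfolding S T
    by (simp add: linear_diff[OF linA] linear_diff[OF linC] linear_diff[OF linJ]
        linear_add[OF linA] linear_add[OF linC] linear_add[OF linJ] linear_scale[OF linJ]
        bounded_op_commute_complex_structure[OF A] bounded_op_commute_complex_structure[OF C]
        JJ scaleR_2 algebra_simps)
qed

theorem mainTheorem3:
  fixes J S A C :: "'a::{real_inner, complete_space} \<Rightarrow> 'a"
  assumes "complex_structure J"
    and "separable_space TYPE('a)"
    and "bounded_op J S"
    and "self_adjoint J A" and "self_adjoint J C"
    and "\<And>x. S x = A x + J (C x)"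
    and "positive_op J A" and "positive_op J C"
  shows "onorm (\<lambda>x. cadjoint J S (S x) - S (cadjoint J S x))
           \<le> (1/2) * ((onorm A)\<^sup>2 + (onorm C)\<^sup>2)"
proof -
  note J = assms(1) and S = assms(6)
  have A: "bounded_op J A" and C: "bounded_op J C"
    using assms(4,5) unfolding self_adjoint_def by auto
  have blA: "bounded_linear A" and blC: "bounded_linear C"
    using A C unfolding bounded_op_def by auto
  note symA = positive_op_symmetric[OF J A assms(7)]
    and symC = positive_op_symmetric[OF J C assms(8)]
  note posA = positive_op_inner_nonneg[OF assms(7)]
    and posC = positive_op_inner_nonneg[OF assms(8)]
  define T where "T y = A y - J (C y)" for y
  have adj: "cadjoint J S = T"
    unfolding T_def by (rule cadjoint_cartesian[OF J A C symA symC S])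
  have "norm (T (S x) - S (T x)) \<le> onorm A * onorm C * norm x" for x
  proof -
    have "norm (T (S x) - S (T x)) = 2 * norm (A (C x) - C (A x))"
      by (simp add: cartesian_self_commutator[OF J A C S T_def] complex_structure_norm[OF J])
    also have "\<dots> \<le> 2 * (2 * (onorm A / 2) * (onorm C / 2) * norm x)"
      using blA blC
      by (intro mult_left_mono norm_commutator_le_of_shift_bounds
          positive_symmetric_norm_shift_le symA symC posA posC)
        (auto simp: onorm_pos_le dest: bounded_linear.linear)
    finally show ?thesis by simp
  qed
  then have "onorm (\<lambda>x. cadjoint J S (S x) - S (cadjoint J S x)) \<le> onorm A * onorm C"
    unfolding adj by (intro onorm_bound) (simp_all add: onorm_pos_le blA blC)
  also have "onorm A * onorm C \<le> (1/2) * ((onorm A)\<^sup>2 + (onorm C)\<^sup>2)"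
    using sum_squares_bound[of "onorm A" "onorm C"] by (simp add: power2_eq_square algebra_simps)
  finally show ?thesis .
qed

end
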